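(* Let $L=\mathbb{Z}\alpha$ with $\langle\alpha,\alpha\rangle=-2k$, $k\in\mathbb{Z}_{>0}$, and let $m\in\mathbb{Z}_{>0}$. In $V_L^+$, consider the elements $f_1=\alpha(-5)F^m$, $f_2=\alpha(-4)\alpha(-1)E^m$, $f_3=\alpha(-3)\alpha(-2)E^m$, $f_4=\alpha(-3)\alpha(-1)^2F^m$, $f_5=\alpha(-2)^2\alpha(-1)F^m$, $f_6=\alpha(-2)\alpha(-1)^3E^m$, $f_7=\alpha(-1)^5F^m$ and $h_1=\alpha(-3)F^m$, $h_2=\alpha(-2)\alpha(-1)E^m$, $h_3=\alpha(-1)^3F^m$. Then the eleven vectors $L(-1)f_i$ ($1\le i\le 7$), $L(-3)h_j$ ($1\le j\le 3$) and $(\alpha(-1)^4\mathbf{1})_{-3}E^m$ form a basis of the weight space $V_L^+(m,-km^2+6)$.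
   Context: Let $L$ be an even lattice with non-degenerate symmetric $\mathbb{Z}$-bilinear form $\langle\cdot,\cdot\rangle$, $\mathfrak{h}=\mathbb{C}\otimes_{\mathbb{Z}}L$, $M(1)$ the Heisenberg vertex algebra (free bosons) generated by $h(-n)$, $h\in\mathfrak{h}$, $n>0$, with $[h(m),h'(n)]=m\langle h,h'\rangle\delta_{m+n,0}$, and $V_L=M(1)\otimes\mathbb{C}[L]$ the lattice vertex algebra (defined with a 2-cocycle on $L$), with conformal vector $\omega=\frac12\sum_i h_i(-1)^2\mathbf{1}$ for an orthonormal basis $\{h_i\}$ of $\mathfrak{h}$, $Y(\omega,z)=\sum_nL(n)z^{-n-2}$. The weight of $\beta_1(-n_1)\cdots\beta_r(-n_r)e^{\beta}$ is $n_1+\cdots+n_r+\langle\beta,\beta\rangle/2$. Let $\theta$ be the automorphism of $V_L$ with $\theta(\beta_1(-n_1)\cdots\beta_r(-n_r)e^{\beta})=(-1)^r\beta_1(-n_1)\cdots\beta_r(-n_r)e^{-\beta}$; $V_L^+$ (resp. $M(1)^\pm$) denotes the $+1$-eigenspace of $\theta$ on $V_L$ (resp. $\pm1$-eigenspaces on $M(1)$). For $u\in V_L$, $Y(u,z)=\sum_n u_nz^{-n-1}$. For $L=\mathbb{Z}\alpha$ and $m\in\mathbb{Z}_{>0}$, set $E^m=e^{m\alpha}+e^{-m\alpha}$, $F^m=e^{m\alpha}-e^{-m\alpha}$, $V_L^+(m)=M(1)^+\otimes E^m\oplus M(1)^-\otimes F^m$, and $V_L^+(m,n)$ the weight-$n$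 subspace of $V_L^+(m)$. An expression like $\alpha(-2)\alpha(-1)E^m$ means $\alpha(-2)\alpha(-1)\mathbf{1}\otimes E^m$. *)

theory Defs
  imports Complex_Main "HOL-Library.Multiset"
begin

text \<open>Model of the rank-one lattice vertex algebra V_L, L = Z alpha, with norm c = <alpha,alpha>.
  The basis vector alpha(-n_1)...alpha(-n_r) e^{j alpha} (n_i > 0) is indexed by the pair
  (multiset {n_1,...,n_r}, j).  For rank one the
  2-cocycle can be taken trivial.\<close>

type_synonym vec = "nat multiset \<times> int \<Rightarrow> complex"

definition vzero :: vec where "vzero = (\<lambda>_. 0)"
definition vadd :: "vec \<Rightarrow> vec \<Rightarrow> vec" where "vadd u v = (\<lambda>x. u x + v x)"
definition vscale :: "complex \<Rightarrow> vec \<Rightarrow> vec" where "vscale a v = (\<lambda>x. a * v x)"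

definition fsum :: "'i set \<Rightarrow> ('i \<Rightarrow> vec) \<Rightarrow> vec" where
  "fsum S f = (\<lambda>x. \<Sum>i\<in>{i\<in>S. f i x \<noteq> 0}. f i x)"

definition creat :: "nat \<Rightarrow> vec \<Rightarrow> vec" where
  "creat n v = (\<lambda>(M, j). if n \<in># M then v (M - {#n#}, j) else 0)"
definition annih :: "complex \<Rightarrow> nat \<Rightarrow> vec \<Rightarrow> vec" where
  "annih c n v = (\<lambda>(M, j). of_nat n * c * of_nat (count M n + 1) * v (add_mset n M, j))"
definition zeromode :: "complex \<Rightarrow> vec \<Rightarrow> vec" where
  "zeromode c v = (\<lambda>(M, j). of_int j * c * v (M, j))"
definition amode :: "complex \<Rightarrow> int \<Rightarrow> vec \<Rightarrow> vec" where
  "amode c n v = (if n < 0 then creat (nat (- n)) v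
                  else if n = 0 then zeromode c v else annih c (nat n) v)"

text \<open>Normally ordered product :alpha(n_1)...alpha(n_r): (creation modes to the left).\<close>
definition normal_prod :: "complex \<Rightarrow> int list \<Rightarrow> vec \<Rightarrow> vec" where
  "normal_prod c ns v = foldr (amode c) (sort ns) v"

text \<open>The mode u_p of u = alpha(-1)^r 1, i.e. Y(u,z) = :alpha(z)^r: = sum_p u_p z^{-p-1}.\<close>
definition alpha_pow_mode :: "complex \<Rightarrow> nat \<Rightarrow> int \<Rightarrow> vec \<Rightarrow> vec" where
  "alpha_pow_mode c r p v =
     fsum {ns. length ns = r \<and> sum_list ns = p + 1 - int r} (\<lambda>ns. normal_prod c ns v)"

text \<open>Virasoro modes: omega = (1/(2c)) alpha(-1)^2 1, L(n) = omega_{n+1}.\<close>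
definition Lmode :: "complex \<Rightarrow> int \<Rightarrow> vec \<Rightarrow> vec" where
  "Lmode c n v = vscale (1 / (2 * c)) (alpha_pow_mode c 2 (n + 1) v)"

definition Fock :: "(nat multiset \<Rightarrow> complex) set" where
  "Fock = {u. finite {M. u M \<noteq> 0} \<and> (\<forall>M. u M \<noteq> 0 \<longrightarrow> 0 \<notin># M)}"
definition theta_M1 :: "(nat multiset \<Rightarrow> complex) \<Rightarrow> (nat multiset \<Rightarrow> complex)" where
  "theta_M1 u = (\<lambda>M. (-1) ^ size M * u M)"
definition M1plus :: "(nat multiset \<Rightarrow> complex) set" where
  "M1plus = {u \<in> Fock. theta_M1 u = u}"
definition M1minus :: "(nat multiset \<Rightarrow> complex) set" where
  "M1minus = {u \<in> Fock. theta_M1 u = (\<lambda>M. - u M)}"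

definition vacuum :: "nat multiset \<Rightarrow> complex" where
  "vacuum = (\<lambda>M. if M = {#} then 1 else 0)"

text \<open>Elements of C[L] as coefficient functions j |-> coefficient of e^{j alpha}.\<close>
definition E_lat :: "int \<Rightarrow> int \<Rightarrow> complex" where
  "E_lat m = (\<lambda>j. (if j = m then 1 else 0) + (if j = - m then 1 else 0))"
definition F_lat :: "int \<Rightarrow> int \<Rightarrow> complex" where
  "F_lat m = (\<lambda>j. (if j = m then 1 else 0) - (if j = - m then 1 else 0))"

definition tensor :: "(nat multiset \<Rightarrow> complex) \<Rightarrow> (int \<Rightarrow> complex) \<Rightarrow> vec" where
  "tensor u g = (\<lambda>(M, j). u M * g j)"

definition Evec :: "int \<Rightarrow> vec" where "Evec m = tensor vacuum (E_lat m)"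
definition Fvec :: "int \<Rightarrow> vec" where "Fvec m = tensor vacuum (F_lat m)"

definition VLplus :: "int \<Rightarrow> vec set" where
  "VLplus m = {vadd (tensor u (E_lat m)) (tensor u' (F_lat m)) | u u'. u \<in> M1plus \<and> u' \<in> M1minus}"

text \<open>Weight of alpha(-n_1)...alpha(-n_r) e^{j alpha} when <alpha,alpha> = -2k.\<close>
definition wt :: "int \<Rightarrow> nat multiset \<times> int \<Rightarrow> int" where
  "wt k x = int (sum_mset (fst x)) - k * (snd x)\<^sup>2"

definition VLplus_wt :: "int \<Rightarrow> int \<Rightarrow> int \<Rightarrow> vec set" where
  "VLplus_wt k m n = {v \<in> VLplus m. \<forall>x. v x \<noteq> 0 \<longrightarrow> wt k x = n}"

definition lincomb :: "(nat \<Rightarrow> complex) \<Rightarrow> vec list \<Rightarrow> vec" where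
  "lincomb a bs = (\<lambda>x. \<Sum>i<length bs. a i * (bs ! i) x)"

definition is_basis :: "vec set \<Rightarrow> vec list \<Rightarrow> bool" where
  "is_basis W bs \<longleftrightarrow> set bs \<subseteq> W
     \<and> (\<forall>a. lincomb a bs = vzero \<longrightarrow> (\<forall>i<length bs. a i = 0))
     \<and> (\<forall>v\<in>W. \<exists>a. v = lincomb a bs)"

end

theory Submission
  imports Defs "Jordan_Normal_Form.Determinant"
begin

(* With this, each of the eleven vectors is expanded in the vectors P (x) (e^{m alpha} +- e^{-m alpha}),
   P running over the eleven partitions of 6 (lemmas expand_...).  The weight space V_L^+(m,-km^2+6)
   is closed under linear combinations and each of its elements is determined by its coefficients at
   (P, m).  The resulting 11x11 coefficient system has only the trivial solution when c m^2 <> 2,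
   which holds since c m^2 = -2km^2 < 0.  A general lemma (a finite family in a subspace W, injective on
   a set of coordinates that determine the elements of W and of the same size, is a basis of W)
   finishes the proof. *)

section \<open>Finite term lists\<close>

type_synonym term_list = "(complex \<times> nat multiset \<times> int) list"

definition tvec :: "term_list \<Rightarrow> Defs.vec" where
  "tvec l = (\<lambda>x. sum_list (map (\<lambda>(a,y). if y = x then a else 0) l))"

lemma tvec_Nil: "tvec [] = vzero"
  by (simp add: tvec_def vzero_def)

lemma tvec_Cons: "tvec ((a,y) # l) x = (if y = x then a else 0) + tvec l x"
  by (simp add: tvec_def)

lemma tvec_append: "tvec (l1 @ l2) x = tvec l1 x + tvec l2 x"
  by (simp add: tvec_def)

lemma tvec_concat: "tvec (concat ls) x = sum_list (map (\<lambda>l. tvec l x) ls)"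
  by (induction ls) (simp_all add: tvec_append tvec_Nil vzero_def)

lemma tvec_notin: "x \<notin> snd ` set l \<Longrightarrow> tvec l x = 0"
  by (induction l) (auto simp: tvec_def)

text \<open>Two term lists denote the same vector if they agree on the monomials occurring in them;
  this reduces vector identities to finitely many coefficient identities.\<close>
lemma tvec_eqI:
  assumes "\<forall>y\<in>set (map snd L1 @ map snd L2). tvec L1 y = tvec L2 y"
  shows "tvec L1 = tvec L2"
proof (rule ext)
  fix x show "tvec L1 x = tvec L2 x"
    using assms tvec_notin[of x L1] tvec_notin[of x L2]
    by (cases "x \<in> set (map snd L1 @ map snd L2)") auto
qed

definition t_scale :: "complex \<Rightarrow> term_list \<Rightarrow> term_list" where
  "t_scale s l = map (\<lambda>(a,y). (s * a, y)) l"
definition t_creat :: "nat \<Rightarrow> term_list \<Rightarrow> term_list" where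
  "t_creat n l = map (\<lambda>(a,M,j). (a, add_mset n M, j)) l"
definition t_annih :: "complex \<Rightarrow> nat \<Rightarrow> term_list \<Rightarrow> term_list" where
  "t_annih c n l = map (\<lambda>(a,M,j). (of_nat n * c * of_nat (count M n) * a, M - {#n#}, j)) l"
definition t_zero :: "complex \<Rightarrow> term_list \<Rightarrow> term_list" where
  "t_zero c l = map (\<lambda>(a,M,j). (of_int j * c * a, M, j)) l"
definition t_amode :: "complex \<Rightarrow> int \<Rightarrow> term_list \<Rightarrow> term_list" where
  "t_amode c n l = (if n < 0 then t_creat (nat (- n)) l
                    else if n = 0 then t_zero c l else t_annih c (nat n) l)"

lemma tvec_t_scale: "tvec (t_scale s l) x = s * tvec l x"
  by (induction l) (auto simp: tvec_def t_scale_def algebra_simps)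

lemma vscale_tvec: "vscale s (tvec l) = tvec (t_scale s l)"
  by (rule ext) (simp add: vscale_def tvec_t_scale)

lemma creat_tvec: "creat n (tvec l) = tvec (t_creat n l)"
proof (rule ext, clarify)
  fix M j show "creat n (tvec l) (M, j) = tvec (t_creat n l) (M, j)"
  proof (induction l)
    case Nil then show ?case by (simp add: creat_def tvec_def t_creat_def)
  next
    case (Cons t l)
    obtain a M' j' where t: "t = (a, M', j')" by (cases t) auto
    have "(add_mset n M' = M) = (n \<in># M \<and> M' = M - {#n#})"
      by (metis add_mset_remove_trivial insert_DiffM union_single_eq_member)
    with Cons show ?case
      by (auto simp: creat_def tvec_def t_creat_def t)
  qed
qed

text \<open>Annihilating a part n of a monomial M' yields the factor n c (count M' n); on the coefficient
  side this is the identity below, which is the heart of the annihilation case.\<close>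
lemma annih_coeff_shift:
  "of_nat n * c * of_nat (count M n + 1) * (if (M', j') = (add_mset n M, j) then a else 0)
     = (if (M' - {#n#}, j') = (M, j) then of_nat n * c * of_nat (count M' n) * a else (0::complex))"
proof (cases "n \<in># M'")
  case True
  then have "(M' = add_mset n M) = (M' - {#n#} = M)"
    by (metis add_mset_remove_trivial insert_DiffM)
  moreover have "M' = add_mset n M \<Longrightarrow> count M' n = count M n + 1" by simp
  ultimately show ?thesis by auto
next
  case False
  then show ?thesis by (auto simp: count_eq_zero_iff)
qed

lemma annih_tvec: "annih c n (tvec l) = tvec (t_annih c n l)"
proof (rule ext, clarify)
  fix M j show "annih c n (tvec l) (M, j) = tvec (t_annih c n l) (M, j)"
  proof (induction l)
    case Nil then show ?case by (simp add: annih_def tvec_def t_annih_def)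
  next
    case (Cons t l)
    obtain a M' j' where t: "t = (a, M', j')" by (cases t) auto
    have "annih c n (tvec (t # l)) (M, j)
        = of_nat n * c * of_nat (count M n + 1) * (if (M', j') = (add_mset n M, j) then a else 0)
          + annih c n (tvec l) (M, j)"
      by (simp add: annih_def tvec_Cons t algebra_simps)
    also have "\<dots> = (if (M' - {#n#}, j') = (M, j) then of_nat n * c * of_nat (count M' n) * a else 0)
          + tvec (t_annih c n l) (M, j)"
      by (simp only: annih_coeff_shift Cons.IH)
    also have "\<dots> = tvec (t_annih c n (t # l)) (M, j)"
      by (simp add: t_annih_def tvec_Cons t)
    finally show ?case .
  qed
qed

lemma zeromode_tvec: "zeromode c (tvec l) = tvec (t_zero c l)"
proof (rule ext, clarify)
  fix M j show "zeromode c (tvec l) (M, j) = tvec (t_zero c l) (M, j)"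
    by (induction l) (auto simp: zeromode_def tvec_def t_zero_def algebra_simps)
qed

lemma amode_tvec: "amode c n (tvec l) = tvec (t_amode c n l)"
  by (simp add: amode_def t_amode_def creat_tvec annih_tvec zeromode_tvec)

lemma foldr_amode_tvec: "foldr (amode c) ns (tvec l) = tvec (foldr (t_amode c) ns l)"
  by (induction ns) (simp_all add: amode_tvec)

section \<open>Reducing alpha_pow_mode to a finite sum\<close>

lemma amode_vzero: "amode c n vzero = vzero"
  by (rule ext) (auto simp: amode_def creat_def annih_def zeromode_def vzero_def)

text \<open>If all monomials of v have parts at most B, then a normally ordered product containing a mode
  alpha(e) with e > B kills v: the rightmost (largest) mode is an annihilator with nothing to remove.\<close>
lemma normal_modes_vanish:
  fixes B :: int
  assumes bnd: "\<forall>M j. v (M,j) \<noteq> 0 \<longrightarrow> (\<forall>x\<in>#M. int x \<le> B)" and B: "B \<ge> 0"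
  shows "sorted xs \<Longrightarrow> \<exists>e\<in>set xs. e > B \<Longrightarrow> foldr (amode c) xs v = vzero"
proof (induction xs)
  case Nil then show ?case by simp
next
  case (Cons a ys)
  show ?case
  proof (cases "\<exists>e\<in>set ys. e > B")
    case True
    then have "foldr (amode c) ys v = vzero" using Cons by simp
    then show ?thesis by (simp add: amode_vzero)
  next
    case False
    then have a: "a > B" using Cons.prems(2) by auto
    have "ys = []" using False Cons.prems(1) a by (cases ys) auto
    have "annih c (nat a) v = vzero"
    proof (rule ext, clarify)
      fix M j
      have "v (add_mset (nat a) M, j) = 0" using bnd a B by force
      then show "annih c (nat a) v (M, j) = vzero (M, j)" by (simp add: annih_def vzero_def)
    qed
    then show ?thesis using \<open>ys = []\<close> a B by (simp add: amode_def)
  qed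
qed

lemma sum_list_le_bound: "\<forall>x\<in>set xs. x \<le> (b::int) \<Longrightarrow> sum_list xs \<le> int (length xs) * b"
  by (induction xs) (auto simp: algebra_simps)

lemma sum_list_ge_bound: "\<forall>x\<in>set xs. (b::int) \<le> x \<Longrightarrow> int (length xs) * b \<le> sum_list xs"
  by (induction xs) (auto simp: algebra_simps)

lemma sum_list_group:
  fixes f :: "'a \<Rightarrow> 'b::comm_semiring_1"
  shows "sum_list (map f xs)
    = sum_list (map (\<lambda>(n,y). of_nat n * f y) (map (\<lambda>y. (count_list xs y, y)) (remdups xs)))"
proof -
  have count: "sum_list (map f xs) = (\<Sum>y\<in>set xs. of_nat (count_list xs y) * f y)"
  proof (induction xs)
    case (Cons x xs)
    have "(\<Sum>y\<in>set (x#xs). of_nat (count_list (x#xs) y) * f y)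
        = (\<Sum>y\<in>insert x (set xs). of_nat (count_list xs y) * f y + (if x = y then f y else 0))"
      by (rule sum.cong) (auto simp: algebra_simps)
    also have "\<dots> = (\<Sum>y\<in>insert x (set xs). of_nat (count_list xs y) * f y) + f x"
      by (simp add: sum.distrib sum.delta)
    also have "(\<Sum>y\<in>insert x (set xs). of_nat (count_list xs y) * f y)
             = (\<Sum>y\<in>set xs. of_nat (count_list xs y) * f y)"
      by (cases "x \<in> set xs") (simp_all add: insert_absorb count_list_0_iff)
    finally show ?case using Cons by (simp add: add.commute)
  qed simp
  show ?thesis by (subst count) (simp add: sum.set_conv_list comp_def)
qed

fun comps :: "nat \<Rightarrow> int \<Rightarrow> int \<Rightarrow> int \<Rightarrow> int list list" where
  "comps 0 lo hi s = (if s = 0 then [[]] else [])"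
| "comps (Suc r) lo hi s = (if s < int (Suc r) * lo \<or> s > int (Suc r) * hi then []
     else concat (map (\<lambda>x. map (\<lambda>ys. x # ys) (comps r lo hi (s - x))) [lo..hi]))"

lemma set_comps:
  "set (comps r lo hi s) = {ns. length ns = r \<and> set ns \<subseteq> {lo..hi} \<and> sum_list ns = s}"
proof (induction r arbitrary: s)
  case 0 then show ?case by auto
next
  case (Suc r)
  show ?case
  proof (cases "s < int (Suc r) * lo \<or> s > int (Suc r) * hi")
    case True
    have "\<not> (length ns = Suc r \<and> set ns \<subseteq> {lo..hi} \<and> sum_list ns = s)" for ns
    proof
      assume h: "length ns = Suc r \<and> set ns \<subseteq> {lo..hi} \<and> sum_list ns = s"
      have "\<forall>x\<in>set ns. lo \<le> x" "\<forall>x\<in>set ns. x \<le> hi" using h by auto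
      then show False
        using sum_list_ge_bound[of ns lo] sum_list_le_bound[of ns hi] h True by auto
    qed
    then show ?thesis using True by auto
  next
    case False
    have "set (comps (Suc r) lo hi s) = (\<Union>x\<in>{lo..hi}. (#) x ` set (comps r lo hi (s - x)))"
      using False by auto
    also have "\<dots> = {ns. length ns = Suc r \<and> set ns \<subseteq> {lo..hi} \<and> sum_list ns = s}"
      unfolding Suc.IH by (auto simp: length_Suc_conv)
    finally show ?thesis .
  qed
qed

lemma distinct_concat_map_disjoint:
  "distinct xs \<Longrightarrow> (\<forall>x\<in>set xs. distinct (f x)) \<Longrightarrow> (\<forall>x y. x \<noteq> y \<longrightarrow> set (f x) \<inter> set (f y) = {})
    \<Longrightarrow> distinct (concat (map f xs))"
proof (induction xs)
  case (Cons a xs)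
  have "set (f a) \<inter> set (f y) = {}" if "y \<in> set xs" for y
  proof -
    have "a \<noteq> y" using that Cons.prems(1) by auto
    then show ?thesis using Cons.prems(3) by blast
  qed
  then have "set (f a) \<inter> set (concat (map f xs)) = {}" by auto
  then show ?case using Cons by simp
qed simp

lemma distinct_comps: "distinct (comps r lo hi s)"
proof (induction r arbitrary: s)
  case (Suc r)
  have "distinct (concat (map (\<lambda>x. map ((#) x) (comps r lo hi (s - x))) [lo..hi]))"
    by (rule distinct_concat_map_disjoint) (auto simp: Suc.IH distinct_map)
  then show ?case by simp
qed simp

text \<open>The sorted mode tuples that can contribute to the r-fold mode u_p on a vector whose monomials
  have parts at most B: they sum to p + 1 - r, have entries at most B (larger modes annihilate,
  lemma normal_modes_vanish), and hence entries at least p + 1 - r - (r - 1) B.\<close>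
definition contributing_modes :: "nat \<Rightarrow> int \<Rightarrow> nat \<Rightarrow> int list list" where
  "contributing_modes r p B =
     map sort (comps r (p + 1 - int r - (int r - 1) * int B) (int B) (p + 1 - int r))"

lemma contributing_tuple:
  fixes B :: nat
  assumes bnd: "\<forall>(a,M,j)\<in>set l. \<forall>x\<in>#M. x \<le> B"
  and len: "length ns = r" and sm: "sum_list ns = s" and nz: "normal_prod c ns (tvec l) x \<noteq> 0"
  shows "ns \<in> set (comps r (s - (int r - 1) * int B) (int B) s)"
proof -
  have bndv: "\<forall>M j. tvec l (M,j) \<noteq> 0 \<longrightarrow> (\<forall>x\<in>#M. int x \<le> int B)"
    using bnd tvec_notin by fastforce
  have le: "\<forall>e\<in>set ns. e \<le> int B"
  proof (rule ccontr)
    assume "\<not> (\<forall>e\<in>set ns. e \<le> int B)"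
    then have "\<exists>e\<in>set (sort ns). e > int B" by (metis not_le set_sort)
    then have "foldr (amode c) (sort ns) (tvec l) = vzero"
      using normal_modes_vanish[OF bndv] by simp
    then show False using nz by (simp add: normal_prod_def vzero_def)
  qed
  have "s - (int r - 1) * int B \<le> e" if e: "e \<in> set ns" for e
  proof -
    have "sum_list ns = e + sum_list (remove1 e ns)"
      using sum_list_map_remove1[OF e, of "\<lambda>x. x"] by simp
    moreover have "sum_list (remove1 e ns) \<le> (int r - 1) * int B"
    proof -
      have "length ns \<ge> 1" using e by (cases ns) auto
      then have "int (length (remove1 e ns)) = int r - 1"
        using e len by (simp add: length_remove1 of_nat_diff)
      moreover have "\<forall>x\<in>set (remove1 e ns). x \<le> int B"
        using le by (auto dest: set_remove1_subset[THEN subsetD])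
      ultimately show ?thesis using sum_list_le_bound[of "remove1 e ns" "int B"] by simp
    qed
    ultimately show ?thesis using sm by linarith
  qed
  then show ?thesis using le len sm by (auto simp: set_comps)
qed

text \<open>The r-fold mode on a term list equals an explicit finite combination of normally ordered
  products, with multiplicities C counting the permutations of each sorted tuple.  In applications
  C is found by evaluation.\<close>
lemma alpha_pow_mode_terms:
  fixes B :: nat and p :: int and r :: nat
  assumes bnd: "\<forall>(a,M,j)\<in>set l. \<forall>x\<in>#M. x \<le> B"
  and C: "map (\<lambda>ns. (count_list (contributing_modes r p B) ns, ns))
              (remdups (contributing_modes r p B)) = C"
  shows "alpha_pow_mode c r p (tvec l)
    = tvec (concat (map (\<lambda>(n,ns). t_scale (of_nat n) (foldr (t_amode c) ns l)) C))"
proof (rule ext)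
  fix x
  define T where "T = comps r (p + 1 - int r - (int r - 1) * int B) (int B) (p + 1 - int r)"
  define S where "S = {ns. length ns = r \<and> sum_list ns = p + 1 - int r}"
  define f where "f = (\<lambda>ns. normal_prod c ns (tvec l) x)"
  define g where "g = (\<lambda>ns. tvec (foldr (t_amode c) ns l) x)"
  have support: "{ns\<in>S. f ns \<noteq> 0} \<subseteq> set T"
  proof
    fix ns assume "ns \<in> {ns\<in>S. f ns \<noteq> 0}"
    then show "ns \<in> set T"
      using contributing_tuple[OF bnd, of ns r "p + 1 - int r" c x] by (simp add: S_def T_def f_def)
  qed
  have "set T \<subseteq> S" by (auto simp: T_def S_def set_comps)
  have "alpha_pow_mode c r p (tvec l) x = (\<Sum>ns\<in>{ns\<in>S. f ns \<noteq> 0}. f ns)"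
    unfolding alpha_pow_mode_def fsum_def S_def f_def ..
  also have "\<dots> = (\<Sum>ns\<in>set T. f ns)"
    using support \<open>set T \<subseteq> S\<close> by (intro sum.mono_neutral_left) auto
  also have "\<dots> = sum_list (map f T)"
    using distinct_comps by (simp add: T_def sum_list_distinct_conv_sum_set)
  also have "\<dots> = sum_list (map g (map sort T))"
    unfolding f_def g_def normal_prod_def foldr_amode_tvec by (simp add: comp_def)
  also have "\<dots> = sum_list (map (\<lambda>(n,ns). of_nat n * g ns)
                      (map (\<lambda>ns. (count_list (map sort T) ns, ns)) (remdups (map sort T))))"
    by (rule sum_list_group)
  also have "\<dots> = sum_list (map (\<lambda>(n,ns). of_nat n * g ns) C)"
    by (simp only: C[symmetric] contributing_modes_def T_def)
  also have "\<dots> = tvec (concat (map (\<lambda>(n,ns). t_scale (of_nat n) (foldr (t_amode c) ns l)) C)) x"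
    unfolding tvec_concat by (simp add: comp_def tvec_t_scale case_prod_unfold g_def)
  finally show "alpha_pow_mode c r p (tvec l) x = \<dots>" .
qed

section \<open>The weight space\<close>

lemma Fock_add:
  assumes "u \<in> Fock" "v \<in> Fock" shows "(\<lambda>M. u M + v M) \<in> Fock"
proof -
  have "{M. u M + v M \<noteq> 0} \<subseteq> {M. u M \<noteq> 0} \<union> {M. v M \<noteq> 0}" by auto
  then show ?thesis using assms unfolding Fock_def by (auto intro: finite_subset)
qed

lemma Fock_scale: "u \<in> Fock \<Longrightarrow> (\<lambda>M. a * u M) \<in> Fock"
  unfolding Fock_def by (auto intro: finite_subset[of _ "{M. u M \<noteq> 0}"])

lemma M1plus_iff: "u \<in> M1plus \<longleftrightarrow> u \<in> Fock \<and> (\<forall>M. (-1) ^ size M * u M = u M)"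
  unfolding M1plus_def theta_M1_def fun_eq_iff by blast

lemma M1minus_iff: "u \<in> M1minus \<longleftrightarrow> u \<in> Fock \<and> (\<forall>M. (-1) ^ size M * u M = - u M)"
  unfolding M1minus_def theta_M1_def fun_eq_iff by blast

lemma M1plus_lin:
  assumes "u \<in> M1plus" "v \<in> M1plus" shows "(\<lambda>M. a * u M + v M) \<in> M1plus"
proof -
  have hu: "(-1) ^ size M * u M = u M" and hv: "(-1) ^ size M * v M = v M" for M
    using assms unfolding M1plus_iff by blast+
  have "(-1) ^ size M * (a * u M + v M) = a * ((-1) ^ size M * u M) + (-1) ^ size M * v M" for M
    by (simp add: algebra_simps)
  then have "(-1) ^ size M * (a * u M + v M) = a * u M + v M" for M
    by (simp only: hu hv)
  then show ?thesis using assms Fock_add Fock_scale unfolding M1plus_iff by blast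
qed

lemma M1minus_lin:
  assumes "u \<in> M1minus" "v \<in> M1minus" shows "(\<lambda>M. a * u M + v M) \<in> M1minus"
proof -
  have hu: "(-1) ^ size M * u M = - u M" and hv: "(-1) ^ size M * v M = - v M" for M
    using assms unfolding M1minus_iff by blast+
  have "(-1) ^ size M * (a * u M + v M) = a * ((-1) ^ size M * u M) + (-1) ^ size M * v M" for M
    by (simp add: algebra_simps)
  then have "(-1) ^ size M * (a * u M + v M) = - (a * u M + v M)" for M
    by (simp add: hu hv)
  then show ?thesis using assms Fock_add Fock_scale unfolding M1minus_iff by blast
qed

lemma zero_M1plus: "(\<lambda>M. 0) \<in> M1plus" by (simp add: M1plus_def Fock_def theta_M1_def)

lemma zero_M1minus: "(\<lambda>M. 0) \<in> M1minus" by (simp add: M1minus_def Fock_def theta_M1_def)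

lemma VLplus_lin: "v \<in> VLplus m \<Longrightarrow> v' \<in> VLplus m \<Longrightarrow> vadd (vscale a v) v' \<in> VLplus m"
proof -
  assume "v \<in> VLplus m" "v' \<in> VLplus m"
  then obtain u1 u1' u2 u2' where h: "v = vadd (tensor u1 (E_lat m)) (tensor u1' (F_lat m))"
    "u1 \<in> M1plus" "u1' \<in> M1minus" "v' = vadd (tensor u2 (E_lat m)) (tensor u2' (F_lat m))"
    "u2 \<in> M1plus" "u2' \<in> M1minus"
    by (auto simp: VLplus_def)
  have "vadd (vscale a v) v'
      = vadd (tensor (\<lambda>M. a * u1 M + u2 M) (E_lat m)) (tensor (\<lambda>M. a * u1' M + u2' M) (F_lat m))"
    by (rule ext) (simp add: h(1,4) vadd_def vscale_def tensor_def split: prod.splits;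
                   simp add: algebra_simps)
  then show ?thesis unfolding VLplus_def using h M1plus_lin M1minus_lin by blast
qed

lemma VLplus_wt_lin:
  assumes "v \<in> VLplus_wt k m n" "v' \<in> VLplus_wt k m n"
  shows "vadd (vscale a v) v' \<in> VLplus_wt k m n"
proof -
  have "wt k x = n" if "vadd (vscale a v) v' x \<noteq> 0" for x
  proof -
    have "v x \<noteq> 0 \<or> v' x \<noteq> 0" using that by (auto simp: vadd_def vscale_def)
    then show ?thesis using assms unfolding VLplus_wt_def by blast
  qed
  then show ?thesis using assms VLplus_lin unfolding VLplus_wt_def by blast
qed

lemma VLplus_wt_zero: "vzero \<in> VLplus_wt k m n"
proof -
  have "vzero = vadd (tensor (\<lambda>M. 0) (E_lat m)) (tensor (\<lambda>M. 0) (F_lat m))"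
    by (rule ext) (simp add: vzero_def vadd_def tensor_def split: prod.splits)
  then have "vzero \<in> VLplus m" using zero_M1plus zero_M1minus by (auto simp: VLplus_def)
  then show ?thesis by (simp add: VLplus_wt_def vzero_def)
qed

definition sym_terms :: "int \<Rightarrow> nat multiset \<Rightarrow> term_list" where
  "sym_terms m P = [(1, P, m), (if even (size P) then 1 else -1, P, -m)]"

definition sym_comb :: "int \<Rightarrow> (complex \<times> nat multiset) list \<Rightarrow> term_list" where
  "sym_comb m xs = concat (map (\<lambda>(a,P). t_scale a (sym_terms m P)) xs)"

lemma sym_terms_in_VLplus_wt:
  assumes P: "0 \<notin># P"
  shows "tvec (sym_terms m P) \<in> VLplus_wt k m (wt k (P, m))"
proof -
  define d where "d = (\<lambda>M. if M = P then (1::complex) else 0)"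
  have dF: "d \<in> Fock" using P by (auto simp: Fock_def d_def)
  have "tvec (sym_terms m P) \<in> VLplus m"
  proof (cases "even (size P)")
    case True
    have "d \<in> M1plus" using dF True by (auto simp: M1plus_iff d_def)
    moreover have "tvec (sym_terms m P) = vadd (tensor d (E_lat m)) (tensor (\<lambda>M. 0) (F_lat m))"
      using True by (intro ext)
        (auto simp: tvec_def sym_terms_def vadd_def tensor_def d_def E_lat_def split: prod.splits)
    ultimately show ?thesis using zero_M1minus by (auto simp: VLplus_def)
  next
    case False
    have "d \<in> M1minus" using dF False by (auto simp: M1minus_iff d_def)
    moreover have "tvec (sym_terms m P) = vadd (tensor (\<lambda>M. 0) (E_lat m)) (tensor d (F_lat m))"
      using False by (intro ext)
        (auto simp: tvec_def sym_terms_def vadd_def tensor_def d_def F_lat_def split: prod.splits)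
    ultimately show ?thesis using zero_M1plus by (auto simp: VLplus_def)
  qed
  moreover have "wt k x = wt k (P, m)" if "tvec (sym_terms m P) x \<noteq> 0" for x
  proof -
    have "x = (P, m) \<or> x = (P, -m)"
      using that tvec_notin[of x "sym_terms m P"] by (auto simp: sym_terms_def)
    then show ?thesis by (auto simp: wt_def)
  qed
  ultimately show ?thesis by (simp add: VLplus_wt_def)
qed

lemma sym_comb_in_VLplus_wt:
  "\<forall>(a,P)\<in>set xs. 0 \<notin># P \<and> wt k (P, m) = n \<Longrightarrow> tvec (sym_comb m xs) \<in> VLplus_wt k m n"
proof (induction xs)
  case Nil then show ?case by (simp add: sym_comb_def tvec_Nil VLplus_wt_zero)
next
  case (Cons t xs)
  obtain a P where t: "t = (a, P)" by (cases t) auto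
  have "tvec (sym_comb m (t # xs)) = vadd (vscale a (tvec (sym_terms m P))) (tvec (sym_comb m xs))"
    by (rule ext) (simp add: t sym_comb_def tvec_append tvec_t_scale vadd_def vscale_def)
  then show ?case using Cons t sym_terms_in_VLplus_wt[of P m k] VLplus_wt_lin by auto
qed

text \<open>An element of a weight space of V_L^+(m), m <> 0, is determined by its coefficients at the
  monomials (P, m): the coefficient at (P, -m) is +- the one at (P, m) by theta-invariance.\<close>
lemma VLplus_wt_determined:
  assumes m: "m \<noteq> 0" and d: "d \<in> VLplus_wt k m n"
  and z: "\<forall>P. 0 \<notin># P \<and> wt k (P, m) = n \<longrightarrow> d (P, m) = 0"
  shows "d = vzero"
proof -
  obtain u u' where h: "d = vadd (tensor u (E_lat m)) (tensor u' (F_lat m))"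
    "u \<in> M1plus" "u' \<in> M1minus"
    using d by (auto simp: VLplus_wt_def VLplus_def)
  have dm: "d (M, m) = u M + u' M" for M
    using m by (simp add: h vadd_def tensor_def E_lat_def F_lat_def)
  have up: "(-1) ^ size M * u M = u M" and um: "(-1) ^ size M * u' M = - u' M" for M
    using h(2,3) by (auto simp: M1plus_iff M1minus_iff)
  have u0: "u M = 0 \<and> u' M = 0" for M
  proof -
    have "u M = 0 \<or> u' M = 0"
      using up[of M] um[of M] by (cases "even (size M)") auto
    moreover have "d (M, m) = 0"
    proof (rule ccontr)
      assume nz: "d (M, m) \<noteq> 0"
      then have "wt k (M, m) = n" using d by (simp add: VLplus_wt_def)
      moreover have "0 \<notin># M"
      proof -
        have "u M \<noteq> 0 \<or> u' M \<noteq> 0" using nz dm by auto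
        then show ?thesis using h(2,3) by (auto simp: M1plus_def M1minus_def Fock_def)
      qed
      ultimately show False using z nz by blast
    qed
    ultimately show ?thesis using dm[of M] by auto
  qed
  show ?thesis by (rule ext) (simp add: h vadd_def tensor_def vzero_def u0 split: prod.splits)
qed

definition partitions6 :: "nat multiset list" where
  "partitions6 = [{#5,1#}, {#4,2#}, {#3,3#}, {#3,1,1,1#}, {#2,2,1,1#}, {#1,1,1,1,1,1#}, {#6#},
                  {#4,1,1#}, {#3,2,1#}, {#2,2,2#}, {#2,1,1,1,1#}]"

text \<open>Every composition of 6 sorts into one of the listed partitions (checked by evaluation);
  hence the list is complete.\<close>
lemma compositions6_partitions6:
  "list_all (\<lambda>ys. mset (map nat ys) \<in> set partitions6) (concat (map (\<lambda>r. comps r 1 6 6) [0..<7]))"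
  by code_simp

lemma partitions6_complete:
  assumes P: "sum_mset P = 6" "0 \<notin># P"
  shows "P \<in> set partitions6"
proof -
  define xs where "xs = sorted_list_of_multiset P"
  have Pxs: "P = mset (map nat (map int xs))" by (simp add: xs_def comp_def)
  have sx: "sum_list xs = 6" using P(1) by (metis xs_def mset_sorted_list_of_multiset sum_mset_sum_list)
  then have sxi: "sum_list (map int xs) = 6" by (simp add: sum_list_of_nat)
  have "x \<noteq> 0" if "x \<in> set xs" for x
  proof
    assume "x = 0"
    with that P(2) show False by (simp add: xs_def)
  qed
  then have "\<forall>x\<in>set xs. 1 \<le> x" by (simp add: Suc_le_eq)
  then have ge1: "\<forall>x\<in>set (map int xs). 1 \<le> x" by auto
  have le6: "\<forall>x\<in>set (map int xs). x \<le> 6" using sx by (auto dest!: member_le_sum_list)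
  have "length xs < 7" using sum_list_ge_bound[OF ge1] sxi by simp
  then have "map int xs \<in> set (concat (map (\<lambda>r. comps r 1 6 6) [0..<7]))"
    using ge1 le6 sxi by (auto simp: set_comps)
  then have "mset (map nat (map int xs)) \<in> set partitions6"
    using compositions6_partitions6 unfolding list_all_iff by blast
  then show ?thesis unfolding Pxs .
qed

section \<open>Expansion of the eleven vectors\<close>

lemma Fvec_tvec: "Fvec m = tvec [(1, {#}, m), (-1, {#}, -m)]"
  by (rule ext, clarify) (simp add: Fvec_def tensor_def vacuum_def F_lat_def tvec_def)

lemma Evec_tvec: "Evec m = tvec (sym_terms m {#})"
  by (rule ext, clarify) (simp add: Evec_def tensor_def vacuum_def E_lat_def tvec_def sym_terms_def)

lemma mset_lit_eq:
  "(add_mset a A = add_mset b B) = (\<forall>x\<in>set_mset (add_mset a A) \<union> set_mset (add_mset b B).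
     count (add_mset a A) x = count (add_mset b B) x)"
  by (metis UnCI count_eq_zero_iff multiset_eq_iff)

lemmas calc_simps = mset_lit_eq t_amode_def t_creat_def t_annih_def t_zero_def t_scale_def
  sym_comb_def sym_terms_def

lemma expand_f1:
  assumes "c \<noteq> 0"
  shows "Lmode c (-1) (amode c (-5) (Fvec m))
    = tvec (sym_comb m [(of_int m, {#5,1#}), (5, {#6#})])"
proof -
  have mono: "amode c (-5) (Fvec m) = tvec (sym_terms m {#5#})"
    by (simp add: Fvec_tvec amode_tvec calc_simps)
  have modes: "alpha_pow_mode c 2 (-1+1) (tvec (sym_terms m {#5#}))
      = tvec (concat (map (\<lambda>(n,ns). t_scale (of_nat n) (foldr (t_amode c) ns (sym_terms m {#5#})))
          [(2, [- 1, 0]), (2, [- 2, 1]), (2, [- 3, 2]), (2, [- 4, 3]), (2, [- 5, 4]), (2, [- 6, 5])]))"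
    by (rule alpha_pow_mode_terms[where B=5]) (simp add: sym_terms_def, code_simp)
  show ?thesis
    unfolding Lmode_def mono modes vscale_tvec
    by (rule tvec_eqI) (use assms in \<open>simp add: calc_simps tvec_def field_simps\<close>)
qed

lemma expand_f2:
  assumes "c \<noteq> 0"
  shows "Lmode c (-1) (amode c (-4) (amode c (-1) (Evec m)))
    = tvec (sym_comb m [(4, {#5,1#}), (1, {#4,2#}), (of_int m, {#4,1,1#})])"
proof -
  have mono: "amode c (-4) (amode c (-1) (Evec m)) = tvec (sym_terms m {#4,1#})"
    by (simp add: Evec_tvec amode_tvec calc_simps)
  have modes: "alpha_pow_mode c 2 (-1+1) (tvec (sym_terms m {#4,1#}))
      = tvec (concat (map (\<lambda>(n,ns). t_scale (of_nat n) (foldr (t_amode c) ns (sym_terms m {#4,1#})))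
          [(2, [- 1, 0]), (2, [- 2, 1]), (2, [- 3, 2]), (2, [- 4, 3]), (2, [- 5, 4])]))"
    by (rule alpha_pow_mode_terms[where B=4]) (simp add: sym_terms_def, code_simp)
  show ?thesis
    unfolding Lmode_def mono modes vscale_tvec
    by (rule tvec_eqI) (use assms in \<open>simp add: calc_simps tvec_def field_simps\<close>)
qed

lemma expand_f3:
  assumes "c \<noteq> 0"
  shows "Lmode c (-1) (amode c (-3) (amode c (-2) (Evec m)))
    = tvec (sym_comb m [(3, {#4,2#}), (2, {#3,3#}), (of_int m, {#3,2,1#})])"
proof -
  have mono: "amode c (-3) (amode c (-2) (Evec m)) = tvec (sym_terms m {#3,2#})"
    by (simp add: Evec_tvec amode_tvec calc_simps)
  have modes: "alpha_pow_mode c 2 (-1+1) (tvec (sym_terms m {#3,2#}))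
      = tvec (concat (map (\<lambda>(n,ns). t_scale (of_nat n) (foldr (t_amode c) ns (sym_terms m {#3,2#})))
          [(2, [- 1, 0]), (2, [- 2, 1]), (2, [- 3, 2]), (2, [- 4, 3])]))"
    by (rule alpha_pow_mode_terms[where B=3]) (simp add: sym_terms_def, code_simp)
  show ?thesis
    unfolding Lmode_def mono modes vscale_tvec
    by (rule tvec_eqI) (use assms in \<open>simp add: calc_simps tvec_def field_simps\<close>)
qed

lemma expand_f4:
  assumes "c \<noteq> 0"
  shows "Lmode c (-1) (amode c (-3) (amode c (-1) (amode c (-1) (Fvec m))))
    = tvec (sym_comb m [(of_int m, {#3,1,1,1#}), (3, {#4,1,1#}), (2, {#3,2,1#})])"
proof -
  have mono: "amode c (-3) (amode c (-1) (amode c (-1) (Fvec m))) = tvec (sym_terms m {#3,1,1#})"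
    by (simp add: Fvec_tvec amode_tvec calc_simps)
  have modes: "alpha_pow_mode c 2 (-1+1) (tvec (sym_terms m {#3,1,1#}))
      = tvec (concat (map (\<lambda>(n,ns). t_scale (of_nat n) (foldr (t_amode c) ns (sym_terms m {#3,1,1#})))
          [(2, [- 1, 0]), (2, [- 2, 1]), (2, [- 3, 2]), (2, [- 4, 3])]))"
    by (rule alpha_pow_mode_terms[where B=3]) (simp add: sym_terms_def, code_simp)
  show ?thesis
    unfolding Lmode_def mono modes vscale_tvec
    by (rule tvec_eqI) (use assms in \<open>simp add: calc_simps tvec_def field_simps\<close>)
qed

lemma expand_f5:
  assumes "c \<noteq> 0"
  shows "Lmode c (-1) (amode c (-2) (amode c (-2) (amode c (-1) (Fvec m))))
    = tvec (sym_comb m [(of_int m, {#2,2,1,1#}), (4, {#3,2,1#}), (1, {#2,2,2#})])"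
proof -
  have mono: "amode c (-2) (amode c (-2) (amode c (-1) (Fvec m))) = tvec (sym_terms m {#2,2,1#})"
    by (simp add: Fvec_tvec amode_tvec calc_simps)
  have modes: "alpha_pow_mode c 2 (-1+1) (tvec (sym_terms m {#2,2,1#}))
      = tvec (concat (map (\<lambda>(n,ns). t_scale (of_nat n) (foldr (t_amode c) ns (sym_terms m {#2,2,1#})))
          [(2, [- 1, 0]), (2, [- 2, 1]), (2, [- 3, 2])]))"
    by (rule alpha_pow_mode_terms[where B=2]) (simp add: sym_terms_def, code_simp)
  show ?thesis
    unfolding Lmode_def mono modes vscale_tvec
    by (rule tvec_eqI) (use assms in \<open>simp add: calc_simps tvec_def field_simps\<close>)
qed

lemma expand_f6:
  assumes "c \<noteq> 0"
  shows "Lmode c (-1) (amode c (-2) (amode c (-1) (amode c (-1) (amode c (-1) (Evec m)))))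
    = tvec (sym_comb m [(2, {#3,1,1,1#}), (3, {#2,2,1,1#}), (of_int m, {#2,1,1,1,1#})])"
proof -
  have mono: "amode c (-2) (amode c (-1) (amode c (-1) (amode c (-1) (Evec m)))) = tvec (sym_terms m {#2,1,1,1#})"
    by (simp add: Evec_tvec amode_tvec calc_simps)
  have modes: "alpha_pow_mode c 2 (-1+1) (tvec (sym_terms m {#2,1,1,1#}))
      = tvec (concat (map (\<lambda>(n,ns). t_scale (of_nat n) (foldr (t_amode c) ns (sym_terms m {#2,1,1,1#})))
          [(2, [- 1, 0]), (2, [- 2, 1]), (2, [- 3, 2])]))"
    by (rule alpha_pow_mode_terms[where B=2]) (simp add: sym_terms_def, code_simp)
  show ?thesis
    unfolding Lmode_def mono modes vscale_tvec
    by (rule tvec_eqI) (use assms in \<open>simp add: calc_simps tvec_def field_simps\<close>)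
qed

lemma expand_f7:
  assumes "c \<noteq> 0"
  shows "Lmode c (-1) (amode c (-1) (amode c (-1) (amode c (-1) (amode c (-1) (amode c (-1) (Fvec m))))))
    = tvec (sym_comb m [(of_int m, {#1,1,1,1,1,1#}), (5, {#2,1,1,1,1#})])"
proof -
  have mono: "amode c (-1) (amode c (-1) (amode c (-1) (amode c (-1) (amode c (-1) (Fvec m))))) = tvec (sym_terms m {#1,1,1,1,1#})"
    by (simp add: Fvec_tvec amode_tvec calc_simps)
  have modes: "alpha_pow_mode c 2 (-1+1) (tvec (sym_terms m {#1,1,1,1,1#}))
      = tvec (concat (map (\<lambda>(n,ns). t_scale (of_nat n) (foldr (t_amode c) ns (sym_terms m {#1,1,1,1,1#})))
          [(2, [- 1, 0]), (2, [- 2, 1])]))"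
    by (rule alpha_pow_mode_terms[where B=1]) (simp add: sym_terms_def, code_simp)
  show ?thesis
    unfolding Lmode_def mono modes vscale_tvec
    by (rule tvec_eqI) (use assms in \<open>simp add: calc_simps tvec_def field_simps\<close>)
qed

lemma expand_h1:
  assumes "c \<noteq> 0"
  shows "Lmode c (-3) (amode c (-3) (Fvec m))
    = tvec (sym_comb m [(of_int m, {#3,3#}), (3, {#6#}), (1 / c, {#3,2,1#})])"
proof -
  have mono: "amode c (-3) (Fvec m) = tvec (sym_terms m {#3#})"
    by (simp add: Fvec_tvec amode_tvec calc_simps)
  have modes: "alpha_pow_mode c 2 (-3+1) (tvec (sym_terms m {#3#}))
      = tvec (concat (map (\<lambda>(n,ns). t_scale (of_nat n) (foldr (t_amode c) ns (sym_terms m {#3#})))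
          [(2, [- 2, - 1]), (2, [- 3, 0]), (2, [- 4, 1]), (2, [- 5, 2]), (2, [- 6, 3])]))"
    by (rule alpha_pow_mode_terms[where B=3]) (simp add: sym_terms_def, code_simp)
  show ?thesis
    unfolding Lmode_def mono modes vscale_tvec
    by (rule tvec_eqI) (use assms in \<open>simp add: calc_simps tvec_def field_simps\<close>)
qed

lemma expand_h2:
  assumes "c \<noteq> 0"
  shows "Lmode c (-3) (amode c (-2) (amode c (-1) (Evec m)))
    = tvec (sym_comb m [(2, {#5,1#}), (1, {#4,2#}), (1 / c, {#2,2,1,1#}), (of_int m, {#3,2,1#})])"
proof -
  have mono: "amode c (-2) (amode c (-1) (Evec m)) = tvec (sym_terms m {#2,1#})"
    by (simp add: Evec_tvec amode_tvec calc_simps)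
  have modes: "alpha_pow_mode c 2 (-3+1) (tvec (sym_terms m {#2,1#}))
      = tvec (concat (map (\<lambda>(n,ns). t_scale (of_nat n) (foldr (t_amode c) ns (sym_terms m {#2,1#})))
          [(2, [- 2, - 1]), (2, [- 3, 0]), (2, [- 4, 1]), (2, [- 5, 2])]))"
    by (rule alpha_pow_mode_terms[where B=2]) (simp add: sym_terms_def, code_simp)
  show ?thesis
    unfolding Lmode_def mono modes vscale_tvec
    by (rule tvec_eqI) (use assms in \<open>simp add: calc_simps tvec_def field_simps\<close>)
qed

lemma expand_h3:
  assumes "c \<noteq> 0"
  shows "Lmode c (-3) (amode c (-1) (amode c (-1) (amode c (-1) (Fvec m))))
    = tvec (sym_comb m [(of_int m, {#3,1,1,1#}), (3, {#4,1,1#}), (1 / c, {#2,1,1,1,1#})])"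
proof -
  have mono: "amode c (-1) (amode c (-1) (amode c (-1) (Fvec m))) = tvec (sym_terms m {#1,1,1#})"
    by (simp add: Fvec_tvec amode_tvec calc_simps)
  have modes: "alpha_pow_mode c 2 (-3+1) (tvec (sym_terms m {#1,1,1#}))
      = tvec (concat (map (\<lambda>(n,ns). t_scale (of_nat n) (foldr (t_amode c) ns (sym_terms m {#1,1,1#})))
          [(2, [- 2, - 1]), (2, [- 3, 0]), (2, [- 4, 1])]))"
    by (rule alpha_pow_mode_terms[where B=1]) (simp add: sym_terms_def, code_simp)
  show ?thesis
    unfolding Lmode_def mono modes vscale_tvec
    by (rule tvec_eqI) (use assms in \<open>simp add: calc_simps tvec_def field_simps\<close>)
qed

lemma expand_u:
  shows "alpha_pow_mode c 4 (-3) (Evec m)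
    = tvec (sym_comb m [(12 * c * c * of_int m * of_int m, {#5,1#}), (12 * c * c * of_int m * of_int m, {#4,2#}), (6 * c * c * of_int m * of_int m, {#3,3#}), (4, {#3,1,1,1#}), (6, {#2,2,1,1#}), (4 * c * c * c * of_int m * of_int m * of_int m, {#6#}), (12 * c * of_int m, {#4,1,1#}), (24 * c * of_int m, {#3,2,1#}), (4 * c * of_int m, {#2,2,2#})])"
proof -
  have modes: "alpha_pow_mode c 4 (-3) (tvec (sym_terms m {#}))
      = tvec (concat (map (\<lambda>(n,ns). t_scale (of_nat n) (foldr (t_amode c) ns (sym_terms m {#})))
          [(6, [- 2, - 2, - 1, - 1]), (4, [- 3, - 1, - 1, - 1]), (4, [- 2, - 2, - 2, 0]), (24, [- 3, - 2, - 1, 0]), (12, [- 4, - 1, - 1, 0]), (6, [- 3, - 3, 0, 0]), (12, [- 4, - 2, 0, 0]), (12, [- 5, - 1, 0, 0]), (4, [- 6, 0, 0, 0])]))"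
    by (rule alpha_pow_mode_terms[where B=0]) (simp add: sym_terms_def, code_simp)
  show ?thesis
    unfolding Evec_tvec modes
    by (rule tvec_eqI) (simp add: calc_simps tvec_def field_simps)
qed

section \<open>Linear algebra\<close>

lemma square_system_solvable:
  fixes A :: "nat \<Rightarrow> nat \<Rightarrow> 'a::field"
  assumes inj: "\<forall>x. (\<forall>j<n. (\<Sum>i<n. x i * A i j) = 0) \<longrightarrow> (\<forall>i<n. x i = 0)"
  shows "\<exists>x. \<forall>j<n. (\<Sum>i<n. x i * A i j) = w j"
proof -
  define Mt where "Mt = mat n n (\<lambda>(j,i). A i j)"
  have Mc: "Mt \<in> carrier_mat n n" by (simp add: Mt_def)
  have mv: "(Mt *\<^sub>v v) $ j = (\<Sum>i<n. v $ i * A i j)" if "j < n" "v \<in> carrier_vec n" for v j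
    using that by (simp add: Mt_def scalar_prod_def lessThan_atLeast0 mult.commute)
  have "det Mt \<noteq> 0"
  proof
    assume "det Mt = 0"
    then obtain v where v: "v \<in> carrier_vec n" "v \<noteq> 0\<^sub>v n" "Mt *\<^sub>v v = 0\<^sub>v n"
      using det_0_iff_vec_prod_zero_field[OF Mc] by blast
    have "\<forall>j<n. (\<Sum>i<n. (\<lambda>i. v $ i) i * A i j) = 0"
    proof (intro allI impI)
      fix j assume j: "j < n"
      have "(Mt *\<^sub>v v) $ j = 0" using v(3) j by simp
      then show "(\<Sum>i<n. (\<lambda>i. v $ i) i * A i j) = 0" using mv[OF j v(1)] by simp
    qed
    then have "\<forall>i<n. v $ i = 0" using inj by blast
    then have "v = 0\<^sub>v n" using v(1) by (intro eq_vecI) auto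
    then show False using v(2) by simp
  qed
  then have "Mt \<in> Units (ring_mat TYPE('a) n undefined)" by (rule det_non_zero_imp_unit[OF Mc])
  then obtain B where B: "B \<in> carrier_mat n n" "Mt * B = 1\<^sub>m n"
    unfolding Units_def by (auto simp: ring_mat_def)
  define v where "v = B *\<^sub>v vec n w"
  have vc: "v \<in> carrier_vec n" using B(1) by (simp add: v_def)
  have "Mt *\<^sub>v v = vec n w"
    unfolding v_def using B Mc by (simp add: assoc_mult_mat_vec[symmetric])
  then have "\<forall>j<n. (\<Sum>i<n. v $ i * A i j) = w j"
    using mv[OF _ vc] by (metis index_vec)
  then show ?thesis by blast
qed

lemma lincomb_mem:
  assumes "vzero \<in> W" and "\<And>a u v. u \<in> W \<Longrightarrow> v \<in> W \<Longrightarrow> vadd (vscale a u) v \<in> W"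
  and "set bs \<subseteq> W"
  shows "lincomb a bs \<in> W"
proof -
  have "j \<le> length bs \<Longrightarrow> (\<lambda>x. \<Sum>i<j. a i * (bs ! i) x) \<in> W" for j
  proof (induction j)
    case 0 then show ?case using assms(1) by (simp add: vzero_def)
  next
    case (Suc j)
    have "(\<lambda>x. \<Sum>i<Suc j. a i * (bs ! i) x) = vadd (vscale (a j) (bs ! j)) (\<lambda>x. \<Sum>i<j. a i * (bs ! i) x)"
      by (rule ext) (simp add: vadd_def vscale_def)
    moreover have "bs ! j \<in> W" using assms(3) Suc.prems by auto
    ultimately show ?case using Suc assms(2) by simp
  qed
  then show ?thesis by (simp add: lincomb_def)
qed

lemma is_basis_of_coordinates:
  assumes zero: "vzero \<in> W" and lin: "\<And>a u v. u \<in> W \<Longrightarrow> v \<in> W \<Longrightarrow> vadd (vscale a u) v \<in> W"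
  and sub: "set bs \<subseteq> W"
  and det: "\<And>d. d \<in> W \<Longrightarrow> \<forall>j<length ps. d (ps ! j) = 0 \<Longrightarrow> d = vzero"
  and len: "length ps = length bs"
  and inj: "\<And>x. \<forall>j<length ps. lincomb x bs (ps ! j) = 0 \<Longrightarrow> \<forall>i<length bs. x i = 0"
  shows "is_basis W bs"
proof -
  have indep: "\<forall>i<length bs. a i = 0" if "lincomb a bs = vzero" for a
  proof -
    have "\<forall>j<length ps. lincomb a bs (ps ! j) = 0" using that by (simp add: vzero_def)
    then show ?thesis by (rule inj)
  qed
  have span: "\<exists>a. v = lincomb a bs" if v: "v \<in> W" for v
  proof -
    define A where "A = (\<lambda>i j. (bs ! i) (ps ! j))"
    have lincomb_A: "lincomb x bs (ps ! j) = (\<Sum>i<length bs. x i * A i j)" for x j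
      by (simp add: lincomb_def A_def)
    have inj_A: "\<forall>x. (\<forall>j<length bs. (\<Sum>i<length bs. x i * A i j) = 0) \<longrightarrow> (\<forall>i<length bs. x i = 0)"
      using inj len by (simp add: lincomb_A)
    obtain x where x: "\<forall>j<length bs. (\<Sum>i<length bs. x i * A i j) = v (ps ! j)"
      using square_system_solvable[OF inj_A, of "\<lambda>j. v (ps ! j)"] by blast
    define d where "d = vadd (vscale (-1) (lincomb x bs)) v"
    have "d \<in> W" unfolding d_def by (rule lin[OF lincomb_mem[OF zero lin sub] v])
    moreover have "\<forall>j<length ps. d (ps ! j) = 0"
      using x len by (simp add: d_def vadd_def vscale_def lincomb_A)
    ultimately have "d = vzero" by (rule det)
    then have "v = lincomb x bs" by (simp add: d_def vadd_def vscale_def vzero_def fun_eq_iff)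
    then show ?thesis by blast
  qed
  show ?thesis unfolding is_basis_def using sub indep span by blast
qed

section \<open>The coefficient matrix\<close>

definition expanded_family :: "complex \<Rightarrow> int \<Rightarrow> Defs.vec list" where
  "expanded_family c m = [
     tvec (sym_comb m [(of_int m, {#5,1#}), (5, {#6#})]),
     tvec (sym_comb m [(4, {#5,1#}), (1, {#4,2#}), (of_int m, {#4,1,1#})]),
     tvec (sym_comb m [(3, {#4,2#}), (2, {#3,3#}), (of_int m, {#3,2,1#})]),
     tvec (sym_comb m [(of_int m, {#3,1,1,1#}), (3, {#4,1,1#}), (2, {#3,2,1#})]),
     tvec (sym_comb m [(of_int m, {#2,2,1,1#}), (4, {#3,2,1#}), (1, {#2,2,2#})]),
     tvec (sym_comb m [(2, {#3,1,1,1#}), (3, {#2,2,1,1#}), (of_int m, {#2,1,1,1,1#})]),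
     tvec (sym_comb m [(of_int m, {#1,1,1,1,1,1#}), (5, {#2,1,1,1,1#})]),
     tvec (sym_comb m [(of_int m, {#3,3#}), (3, {#6#}), (1 / c, {#3,2,1#})]),
     tvec (sym_comb m [(2, {#5,1#}), (1, {#4,2#}), (1 / c, {#2,2,1,1#}), (of_int m, {#3,2,1#})]),
     tvec (sym_comb m [(of_int m, {#3,1,1,1#}), (3, {#4,1,1#}), (1 / c, {#2,1,1,1,1#})]),
     tvec (sym_comb m [(12 * c * c * of_int m * of_int m, {#5,1#}),
       (12 * c * c * of_int m * of_int m, {#4,2#}), (6 * c * c * of_int m * of_int m, {#3,3#}),
       (4, {#3,1,1,1#}), (6, {#2,2,1,1#}), (4 * c * c * c * of_int m * of_int m * of_int m, {#6#}),
       (12 * c * of_int m, {#4,1,1#}), (24 * c * of_int m, {#3,2,1#}), (4 * c * of_int m, {#2,2,2#})])]"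

lemma expanded_family_in_weight_space:
  "set (expanded_family c m) \<subseteq> VLplus_wt k m (- k * m\<^sup>2 + 6)"
  unfolding expanded_family_def list.set insert_subset
  by (intro conjI empty_subsetI sym_comb_in_VLplus_wt) (auto simp: wt_def)

lemma lincomb11: "lincomb x [b0,b1,b2,b3,b4,b5,b6,b7,b8,b9,b10] p =
  x 0 * b0 p + x 1 * b1 p + x 2 * b2 p + x 3 * b3 p + x 4 * b4 p + x 5 * b5 p + x 6 * b6 p
    + x 7 * b7 p + x 8 * b8 p + x 9 * b9 p + x 10 * b10 p"
  by (simp add: lincomb_def numeral_eq_Suc lessThan_Suc algebra_simps)

lemma expanded_family_coordinates:
  fixes m :: int and c :: complex and x :: "nat \<Rightarrow> complex"
  assumes "m \<noteq> 0"
  defines "F \<equiv> lincomb x (expanded_family c m)" and "M \<equiv> (of_int m :: complex)"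
  shows "F ({#5,1#}, m) = M*x 0 + 4*x 1 + 2*x 8 + 12*c*c*M*M*x 10"
    and "F ({#4,2#}, m) = x 1 + 3*x 2 + x 8 + 12*c*c*M*M*x 10"
    and "F ({#3,3#}, m) = 2*x 2 + M*x 7 + 6*c*c*M*M*x 10"
    and "F ({#3,1,1,1#}, m) = M*x 3 + 2*x 5 + M*x 9 + 4*x 10"
    and "F ({#2,2,1,1#}, m) = M*x 4 + 3*x 5 + x 8 / c + 6*x 10"
    and "F ({#1,1,1,1,1,1#}, m) = M*x 6"
    and "F ({#6#}, m) = 5*x 0 + 3*x 7 + 4*c*c*c*M*M*M*x 10"
    and "F ({#4,1,1#}, m) = M*x 1 + 3*x 3 + 3*x 9 + 12*c*M*x 10"
    and "F ({#3,2,1#}, m) = M*x 2 + 2*x 3 + 4*x 4 + x 7 / c + M*x 8 + 24*c*M*x 10"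
    and "F ({#2,2,2#}, m) = x 4 + 4*c*M*x 10"
    and "F ({#2,1,1,1,1#}, m) = M*x 5 + 5*x 6 + x 9 / c"
  using assms unfolding expanded_family_def lincomb11
  by (simp_all add: calc_simps tvec_def)

text \<open>The coefficient system, columns in the order of partitions6 and unknowns x1..x11 for the
  eleven vectors.  Gaussian elimination reduces it to 768 (cM^2)^2 (cM^2 - 2) x11 = 0.\<close>
lemma coefficient_system_trivial:
  fixes c M x1 x2 x3 x4 x5 x6 x7 x8 x9 x10 x11 :: complex
  assumes c: "c \<noteq> 0" and M: "M \<noteq> 0" and u: "c*M^2 \<noteq> 2"
  and col1: "M*x1 + 4*x2 + 2*x9 + 12*c*c*M*M*x11 = 0"
  and col2: "x2 + 3*x3 + x9 + 12*c*c*M*M*x11 = 0"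
  and col3: "2*x3 + M*x8 + 6*c*c*M*M*x11 = 0"
  and col4: "M*x4 + 2*x6 + M*x10 + 4*x11 = 0"
  and col5: "M*x5 + 3*x6 + x9/c + 6*x11 = 0"
  and col6: "M*x7 = 0"
  and col7: "5*x1 + 3*x8 + 4*c*c*c*M*M*M*x11 = 0"
  and col8: "M*x2 + 3*x4 + 3*x10 + 12*c*M*x11 = 0"
  and col9: "M*x3 + 2*x4 + 4*x5 + x8/c + M*x9 + 24*c*M*x11 = 0"
  and col10: "x5 + 4*c*M*x11 = 0"
  and col11: "M*x6 + 5*x7 + x10/c = 0"
  shows "x1 = 0 \<and> x2 = 0 \<and> x3 = 0 \<and> x4 = 0 \<and> x5 = 0 \<and> x6 = 0 \<and> x7 = 0 \<and> x8 = 0 \<and> x9 = 0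
    \<and> x10 = 0 \<and> x11 = 0"
proof -
  have c5: "c*M*x5 + 3*c*x6 + x9 + 6*c*x11 = 0" using col5 c by (simp add: field_simps)
  have c9: "c*M*x3 + 2*c*x4 + 4*c*x5 + x8 + c*M*x9 + 24*c*c*M*x11 = 0"
    using col9 c by (simp add: field_simps)
  have c11: "c*M*x6 + 5*c*x7 + x10 = 0" using col11 c by (simp add: field_simps)
  have p7: "x7 = 0" using col6 M by simp
  have p5: "x5 = -4*c*M*x11" using col10 by Groebner_Basis.algebra
  have p10: "x10 = -c*M*x6" using c11 p7 by Groebner_Basis.algebra
  have p4: "M*x4 = -4*x11 + (c*M^2 - 2)*x6" using col4 p10 by Groebner_Basis.algebra
  have p9: "x9 = (-6*c + 4*c^2*M^2)*x11 - 3*c*x6" using c5 p5 by Groebner_Basis.algebra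
  have p2: "M^2*x2 = (12 - 12*c*M^2)*x11 + 6*x6" using col8 p4 p10 by Groebner_Basis.algebra
  have p3: "3*M^2*x3 = (-12 + 18*c*M^2 - 16*c^2*M^4)*x11 + (-6 + 3*c*M^2)*x6"
    using col2 p2 p9 by Groebner_Basis.algebra
  have p8: "3*M^3*x8 = (24 - 36*c*M^2 + 14*c^2*M^4)*x11 + (12 - 6*c*M^2)*x6"
    using col3 p3 by Groebner_Basis.algebra
  have p1: "M^3*x1 = (-48 + 60*c*M^2 - 20*c^2*M^4)*x11 + (-24 + 6*c*M^2)*x6"
    using col1 p2 p9 by Groebner_Basis.algebra
  txt \<open>The two remaining equations form a 2x2 system in x6, x11 with determinant
    768 (cM^2)^2 (cM^2 - 2).\<close>
  have e9: "(24 - 72*c*M^2 + 38*c^2*M^4 - 4*c^3*M^6)*x11 + (12 - 24*c*M^2)*x6 = 0"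
    using c9 p3 p4 p5 p8 p9 by Groebner_Basis.algebra
  have e7: "(-216 + 264*c*M^2 - 86*c^2*M^4 + 4*c^3*M^6)*x11 + (-108 + 24*c*M^2)*x6 = 0"
    using col7 p1 p8 by Groebner_Basis.algebra
  have "768*(c*M^2)^2*(c*M^2 - 2)*x11 = 0" using e9 e7 by Groebner_Basis.algebra
  moreover have "768*(c*M^2)^2*(c*M^2 - 2) \<noteq> 0" using c M u by simp
  ultimately have z11: "x11 = 0" by simp
  have "(12 - 24*c*M^2)*x6 = 0" "(-108 + 24*c*M^2)*x6 = 0" using e9 e7 z11 by simp_all
  then have "96*x6 = 0" by Groebner_Basis.algebra
  then have z6: "x6 = 0" by simp
  have "M^3*x1 = 0" "M^2*x2 = 0" "3*M^2*x3 = 0" "M*x4 = 0" "3*M^3*x8 = 0"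
    using p1 p2 p3 p4 p8 z6 z11 by simp_all
  then show ?thesis using M p5 p7 p9 p10 z6 z11 by simp
qed

lemma expanded_family_injective:
  fixes m :: int and c :: complex
  assumes c: "c \<noteq> 0" and m: "m \<noteq> 0" and u: "c * (of_int m)\<^sup>2 \<noteq> 2"
  and h: "\<forall>j<11. lincomb x (expanded_family c m) (partitions6 ! j, m) = 0"
  shows "\<forall>i<11. x i = 0"
proof -
  let ?F = "lincomb x (expanded_family c m)"
  have "length partitions6 = 11" by (simp add: partitions6_def)
  then have "list_all (\<lambda>P. ?F (P, m) = 0) partitions6" using h by (simp add: list_all_length)
  then have cols: "?F ({#5,1#}, m) = 0" "?F ({#4,2#}, m) = 0" "?F ({#3,3#}, m) = 0"
    "?F ({#3,1,1,1#}, m) = 0" "?F ({#2,2,1,1#}, m) = 0" "?F ({#1,1,1,1,1,1#}, m) = 0"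
    "?F ({#6#}, m) = 0" "?F ({#4,1,1#}, m) = 0" "?F ({#3,2,1#}, m) = 0" "?F ({#2,2,2#}, m) = 0"
    "?F ({#2,1,1,1,1#}, m) = 0"
    unfolding partitions6_def list.pred_inject by blast+
  have "(of_int m :: complex) \<noteq> 0" using m by simp
  from coefficient_system_trivial[OF c this u cols[unfolded expanded_family_coordinates[OF m]]]
  show ?thesis by (auto simp: less_Suc_eq numeral_eq_Suc)
qed

lemma expanded_family_basis:
  fixes k m :: int and c :: complex
  assumes c: "c \<noteq> 0" and m: "m \<noteq> 0" and u: "c * (of_int m)\<^sup>2 \<noteq> 2"
  shows "is_basis (VLplus_wt k m (- k * m\<^sup>2 + 6)) (expanded_family c m)"
proof (rule is_basis_of_coordinates)
  let ?ps = "map (\<lambda>P. (P, m)) partitions6"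
  have len_ps: "length ?ps = 11" by (simp add: partitions6_def)
  have len_fam: "length (expanded_family c m) = 11" by (simp add: expanded_family_def)
  show "length ?ps = length (expanded_family c m)" using len_ps len_fam by simp
  show "d = vzero" if d: "d \<in> VLplus_wt k m (- k * m\<^sup>2 + 6)"
    and z: "\<forall>j<length ?ps. d (?ps ! j) = 0" for d
  proof -
    have "d (P, m) = 0" if "0 \<notin># P" "wt k (P, m) = - k * m\<^sup>2 + 6" for P
    proof -
      have "sum_mset P = 6" using that(2) by (simp add: wt_def del: of_nat_sum_mset)
      then have "P \<in> set partitions6" using partitions6_complete that(1) by blast
      then obtain j where "j < length partitions6" "P = partitions6 ! j"
        by (auto simp: in_set_conv_nth)
      then show ?thesis using z by simp
    qed
    then show "d = vzero" using VLplus_wt_determined[OF m d] by blast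
  qed
  show "\<forall>i<length (expanded_family c m). x i = 0"
    if "\<forall>j<length ?ps. lincomb x (expanded_family c m) (?ps ! j) = 0" for x
    using that expanded_family_injective[OF c m u, of x] len_ps len_fam by simp
qed (fact VLplus_wt_zero VLplus_wt_lin expanded_family_in_weight_space)+

theorem lemma4p2:
  fixes k m :: int
  assumes "k > 0" and "m > 0"
  shows "let c = (of_int (- 2 * k) :: complex); a = amode c; E = Evec m; F = Fvec m in
    is_basis (VLplus_wt k m (- k * m\<^sup>2 + 6))
      [Lmode c (-1) (a (-5) F),
       Lmode c (-1) (a (-4) (a (-1) E)),
       Lmode c (-1) (a (-3) (a (-2) E)),
       Lmode c (-1) (a (-3) (a (-1) (a (-1) F))),
       Lmode c (-1) (a (-2) (a (-2) (a (-1) F))),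
       Lmode c (-1) (a (-2) (a (-1) (a (-1) (a (-1) E)))),
       Lmode c (-1) (a (-1) (a (-1) (a (-1) (a (-1) (a (-1) F))))),
       Lmode c (-3) (a (-3) F),
       Lmode c (-3) (a (-2) (a (-1) E)),
       Lmode c (-3) (a (-1) (a (-1) (a (-1) F))),
       alpha_pow_mode c 4 (-3) E]"
proof -
  define c where "c = (of_int (- 2 * k) :: complex)"
  have c: "c \<noteq> 0" using assms by (simp add: c_def)
  have m: "m \<noteq> 0" using assms by simp
  text \<open>c m^2 = -2km^2 is negative, so the determinant factor c m^2 - 2 does not vanish.\<close>
  have "c * (of_int m)\<^sup>2 = of_int (- 2 * k * m\<^sup>2)" by (simp add: c_def)
  moreover have "- 2 * k * m\<^sup>2 \<noteq> 2"
  proof -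
    have "k * m\<^sup>2 > 0" using assms by simp
    then show ?thesis by linarith
  qed
  ultimately have u: "c * (of_int m)\<^sup>2 \<noteq> 2" by (metis of_int_eq_iff of_int_numeral)
  show ?thesis
    unfolding Let_def c_def[symmetric] expand_f1[OF c] expand_f2[OF c] expand_f3[OF c]
      expand_f4[OF c] expand_f5[OF c] expand_f6[OF c] expand_f7[OF c]
      expand_h1[OF c] expand_h2[OF c] expand_h3[OF c] expand_u
    using expanded_family_basis[OF c m u, of k] unfolding expanded_family_def .
qed

end
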